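(* Let $H\subseteq\mathbb{R}^2$ be a functionally connected set such that $\mathrm{pr}_1[H]=\mathbb{R}$. Then for every $f\in C(\mathbb{R},\mathbb{R})$ and every closed set $E\subseteq\mathbb{R}$ such that the graph of $f\restriction E$ is included in $H$, there exists $g\in C(\mathbb{R},\mathbb{R})$ such that $g\restriction E=f\restriction E$ and the graph of $g$ is included in $H$.
   Context: $\mathrm{pr}_1[H]$ is the projection of $H$ to the first coordinate. A set $H\subseteq\mathbb{R}^2$ is functionally connected if for any two points $(x_1,y_1),(x_2,y_2)\in H$ with $x_1\neq x_2$ there exists a continuous function $h$ on the closed interval with endpoints $x_1,x_2$ such that $h(x_1)=y_1$, $h(x_2)=y_2$, and the graph of $h$ is included in $H$. *)

theory Defs
  imports "HOL-Analysis.Analysis"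
begin

definition functionally_connected :: "(real \<times> real) set \<Rightarrow> bool" where
  "functionally_connected H \<longleftrightarrow>
     (\<forall>x1 y1 x2 y2. (x1, y1) \<in> H \<and> (x2, y2) \<in> H \<and> x1 \<noteq> x2 \<longrightarrow>
        (\<exists>h :: real \<Rightarrow> real.
           continuous_on {min x1 x2 .. max x1 x2} h \<and> h x1 = y1 \<and> h x2 = y2 \<and>
           (\<forall>x \<in> {min x1 x2 .. max x1 x2}. (x, h x) \<in> H)))"

end

theory Submission
  imports Defs
begin

text \<open>
Adjoining the integers, with arbitrary values in \<open>H\<close>, we may assume that \<open>E\<close> is unbounded
in both directions, so that its complement is the union of bounded gaps \<open>(a, b)\<close>. On each gap
we join \<open>(a, f a)\<close> to \<open>(b, f b)\<close> by a continuous graph in \<open>H\<close> whose distance from \<open>f a\<close> is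
within \<open>b - a\<close> of the least possible. The resulting \<open>g\<close> is continuous off \<open>E\<close>, and at
a point \<open>p \<in> E\<close> only the small gaps near \<open>p\<close> matter. A fixed graph in \<open>H\<close> through
\<open>(p, f p)\<close> stays close to \<open>f p\<close> near \<open>p\<close>; taking pointwise medians with two auxiliary joins
turns it into a competitor on each such gap that stays close to \<open>f p\<close>, and near-optimality
passes this bound on to \<open>g\<close>.
\<close>

lemma continuous_on_abs_less_nearby:
  fixes w :: "real \<Rightarrow> real"
  assumes "continuous_on S w" "x \<in> S" "\<bar>w x - c\<bar> < e"
  shows "\<exists>d>0. \<forall>y\<in>S. \<bar>y - x\<bar> < d \<longrightarrow> \<bar>w y - c\<bar> < e"
proof -
  have "e - \<bar>w x - c\<bar> > 0" using assms(3) by simp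
  then obtain d where "d > 0" and d: "\<forall>y\<in>S. dist y x < d \<longrightarrow> dist (w y) (w x) < e - \<bar>w x - c\<bar>"
    using assms(1,2) unfolding continuous_on_iff by blast
  have "\<bar>w y - c\<bar> < e" if "y \<in> S" "\<bar>y - x\<bar> < d" for y
  proof -
    have "\<bar>w y - w x\<bar> < e - \<bar>w x - c\<bar>" using d that by (simp add: dist_real_def)
    then show ?thesis by linarith
  qed
  with \<open>d > 0\<close> show ?thesis by blast
qed

definition continuous_graph_in :: "(real \<times> real) set \<Rightarrow> real set \<Rightarrow> (real \<Rightarrow> real) \<Rightarrow> bool" where
  "continuous_graph_in H S h \<longleftrightarrow> continuous_on S h \<and> (\<forall>x\<in>S. (x, h x) \<in> H)"

lemma continuous_graph_in_subset:
  "continuous_graph_in H T h \<Longrightarrow> S \<subseteq> T \<Longrightarrow> continuous_graph_in H S h"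
  unfolding continuous_graph_in_def by (meson continuous_on_subset subsetD)

lemma continuous_graph_in_join:
  assumes "continuous_graph_in H {a..s} u" "continuous_graph_in H {s..b} v" "u s = v s"
  shows "continuous_graph_in H {a..b} (\<lambda>x. if x \<le> s then u x else v x)"
proof -
  have "continuous_on {a..b} (\<lambda>x. if id x \<le> s then u x else v x)"
  proof (rule continuous_on_cases_le)
    show "continuous_on {x \<in> {a..b}. id x \<le> s} u" "continuous_on {x \<in> {a..b}. s \<le> id x} v"
      using assms(1,2) unfolding continuous_graph_in_def by (auto elim: continuous_on_subset)
  qed (use assms(3) in auto)
  then show ?thesis
    using assms(1,2) unfolding continuous_graph_in_def by auto
qed

lemma functionally_connectedD:
  assumes "functionally_connected H" "(x1, y1) \<in> H" "(x2, y2) \<in> H" "x1 < x2"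
  shows "\<exists>h. continuous_graph_in H {x1..x2} h \<and> h x1 = y1 \<and> h x2 = y2"
proof -
  have "min x1 x2 = x1" "max x1 x2 = x2" using assms(4) by auto
  then show ?thesis
    using assms unfolding functionally_connected_def continuous_graph_in_def by force
qed

lemma functionally_connected_path_through:
  assumes H: "functionally_connected H" and "a < p" "p < b"
    and "(a, ya) \<in> H" "(p, yp) \<in> H" "(b, yb) \<in> H"
  shows "\<exists>k. continuous_graph_in H {a..b} k \<and> k p = yp"
proof -
  obtain k1 where k1: "continuous_graph_in H {a..p} k1" "k1 p = yp"
    using functionally_connectedD[OF H assms(4,5,2)] by blast
  obtain k2 where k2: "continuous_graph_in H {p..b} k2" "k2 p = yp"
    using functionally_connectedD[OF H assms(5,6,3)] by blast
  show ?thesis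
    using continuous_graph_in_join[OF k1(1) k2(1)] k1(2) k2(2) by fastforce
qed

section \<open>Joins inside a band\<close>

definition median :: "real \<Rightarrow> real \<Rightarrow> real \<Rightarrow> real" where
  "median u v w = max (min u v) (min (max u v) w)"

lemma median_cases: "median u v w \<in> {u, v, w}"
  unfolding median_def max_def min_def by auto

lemma median_same_outer: "median u v u = u"
  unfolding median_def max_def min_def by auto

lemma median_abs_less:
  "\<bar>v - c\<bar> < e \<Longrightarrow> \<bar>u - c\<bar> < e \<or> \<bar>w - c\<bar> < e \<Longrightarrow> \<bar>median u v w - c\<bar> < e"
  unfolding median_def max_def min_def by auto

lemma continuous_on_median:
  "continuous_on S u \<Longrightarrow> continuous_on S v \<Longrightarrow> continuous_on S w \<Longrightarrow>
    continuous_on S (\<lambda>x. median (u x) (v x) (w x))"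
  unfolding median_def by (intro continuous_intros)

lemma continuous_on_abs_less_near_ends:
  fixes w :: "real \<Rightarrow> real"
  assumes "continuous_on {a..b} w" "a < b" "\<bar>w a - c\<bar> < e" "\<bar>w b - c\<bar> < e"
  shows "\<exists>s t. a < s \<and> s < t \<and> t < b \<and> (\<forall>x\<in>{a..s} \<union> {t..b}. \<bar>w x - c\<bar> < e)"
proof -
  obtain d1 where "d1 > 0" and d1: "\<forall>x\<in>{a..b}. \<bar>x - a\<bar> < d1 \<longrightarrow> \<bar>w x - c\<bar> < e"
    using continuous_on_abs_less_nearby[OF assms(1), of a c e] assms(2,3) by auto
  obtain d2 where "d2 > 0" and d2: "\<forall>x\<in>{a..b}. \<bar>x - b\<bar> < d2 \<longrightarrow> \<bar>w x - c\<bar> < e"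
    using continuous_on_abs_less_nearby[OF assms(1), of b c e] assms(2,4) by auto
  define r where "r = min (min d1 d2) (b - a) / 3"
  have r: "0 < r" "r < d1" "r < d2" "3 * r \<le> b - a"
    using \<open>a < b\<close> \<open>d1 > 0\<close> \<open>d2 > 0\<close> unfolding r_def by auto
  then have "\<forall>x\<in>{a..a + r} \<union> {b - r..b}. \<bar>w x - c\<bar> < e"
    using d1 d2 by auto
  moreover have "a < a + r" "a + r < b - r" "b - r < b"
    using r by auto
  ultimately show ?thesis by blast
qed

lemma functionally_connected_join_in_band:
  assumes H: "functionally_connected H" and "a < b"
    and k: "continuous_graph_in H {a..b} k" "\<forall>x\<in>{a..b}. \<bar>k x - c\<bar> < e"
    and ya: "(a, ya) \<in> H" "\<bar>ya - c\<bar> < e" and yb: "(b, yb) \<in> H" "\<bar>yb - c\<bar> < e"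
  shows "\<exists>h. continuous_graph_in H {a..b} h \<and> h a = ya \<and> h b = yb \<and> (\<forall>x\<in>{a..b}. \<bar>h x - c\<bar> < e)"
proof -
  obtain w where w: "continuous_graph_in H {a..b} w" "w a = ya" "w b = yb"
    using functionally_connectedD[OF H ya(1) yb(1) \<open>a < b\<close>] by blast
  then obtain s t where st: "a < s" "s < t" "t < b" and w_band: "\<forall>x\<in>{a..s} \<union> {t..b}. \<bar>w x - c\<bar> < e"
    using continuous_on_abs_less_near_ends[of a b w c e] \<open>a < b\<close> ya(2) yb(2)
    unfolding continuous_graph_in_def by auto
  have ks: "(s, k s) \<in> H" "(t, k t) \<in> H"
    using k(1) st unfolding continuous_graph_in_def by auto
  obtain w1 where w1: "continuous_graph_in H {a..s} w1" "w1 a = ya" "w1 s = k s"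
    using functionally_connectedD[OF H ya(1) ks(1) \<open>a < s\<close>] by blast
  obtain w2 where w2: "continuous_graph_in H {t..b} w2" "w2 t = k t" "w2 b = yb"
    using functionally_connectedD[OF H ks(2) yb(1) \<open>t < b\<close>] by blast
  define v where "v x = (if x \<le> s then w1 x else if x \<le> t then k x else w2 x)" for x
  have "continuous_graph_in H {s..b} (\<lambda>x. if x \<le> t then k x else w2 x)"
    by (rule continuous_graph_in_join[OF continuous_graph_in_subset[OF k(1)] w2(1)])
      (use st w2(2) in auto)
  then have v: "continuous_graph_in H {a..b} v"
    unfolding v_def using st w1(3) by (intro continuous_graph_in_join[OF w1(1)]) auto
  \<comment> \<open>At every point two of \<open>w\<close>, \<open>k\<close>, \<open>v\<close> lie in the band: \<open>w\<close> and \<open>k\<close> near the ends, \<open>k = v\<close> in between.\<close>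
  define h where "h x = median (w x) (k x) (v x)" for x
  have "(x, h x) \<in> H" if "x \<in> {a..b}" for x
    using that w(1) k(1) v median_cases[of "w x" "k x" "v x"]
    unfolding continuous_graph_in_def h_def by auto
  then have "continuous_graph_in H {a..b} h"
    using w(1) k(1) v unfolding continuous_graph_in_def h_def
    by (auto intro: continuous_on_median)
  moreover have "h a = ya" "h b = yb"
    using st w(2,3) w1(2) w2(3) by (simp_all add: h_def v_def median_same_outer)
  moreover have "\<bar>h x - c\<bar> < e" if "x \<in> {a..b}" for x
    using that k(2) w_band unfolding h_def v_def
    by (intro median_abs_less) (auto simp: not_le)
  ultimately show ?thesis by blast
qed

text \<open>A join minimising the distance from its initial value need not exist; one within \<open>r\<close> of the
  infimum is enough.\<close>
definition near_optimal :: "(real \<times> real) set \<Rightarrow> real \<Rightarrow> real \<Rightarrow> real \<Rightarrow> (real \<Rightarrow> real) \<Rightarrow> bool" where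
  "near_optimal H a b r h \<longleftrightarrow>
     (\<forall>k M. continuous_graph_in H {a..b} k \<and> k a = h a \<and> k b = h b \<and> (\<forall>x\<in>{a..b}. \<bar>k x - h a\<bar> \<le> M)
        \<longrightarrow> (\<forall>x\<in>{a..b}. \<bar>h x - h a\<bar> \<le> M + r))"

lemma functionally_connected_near_optimal_join:
  assumes H: "functionally_connected H" and "(a, ya) \<in> H" "(b, yb) \<in> H" "a < b" "r > 0"
  shows "\<exists>h. continuous_graph_in H {a..b} h \<and> h a = ya \<and> h b = yb \<and> near_optimal H a b r h"
proof -
  define S where "S = {M. \<exists>k. continuous_graph_in H {a..b} k \<and> k a = ya \<and> k b = yb \<and>
                              (\<forall>x\<in>{a..b}. \<bar>k x - ya\<bar> \<le> M)}"
  obtain w where w: "continuous_graph_in H {a..b} w" "w a = ya" "w b = yb"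
    using functionally_connectedD[OF assms(1-4)] by blast
  have "bounded ((\<lambda>x. w x - ya) ` {a..b})"
    using w(1) unfolding continuous_graph_in_def
    by (intro compact_imp_bounded compact_continuous_image continuous_intros) auto
  then obtain B where "\<forall>x\<in>{a..b}. \<bar>w x - ya\<bar> \<le> B"
    unfolding bounded_real by auto
  with w have "B \<in> S" unfolding S_def by blast
  moreover have "bdd_below S"
    using \<open>a < b\<close> unfolding S_def by (intro bdd_belowI[of _ 0]) force
  ultimately have "Inf S < Inf S + r" "S \<noteq> {}" using \<open>r > 0\<close> by auto
  then obtain M0 where "M0 \<in> S" "M0 < Inf S + r"
    using cInf_lessD by blast
  then obtain h where h: "continuous_graph_in H {a..b} h" "h a = ya" "h b = yb"
      and "\<forall>x\<in>{a..b}. \<bar>h x - ya\<bar> \<le> M0"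
    unfolding S_def by blast
  have "near_optimal H a b r h"
    unfolding near_optimal_def
  proof (intro allI impI ballI)
    fix k M x assume "continuous_graph_in H {a..b} k \<and> k a = h a \<and> k b = h b \<and>
      (\<forall>x\<in>{a..b}. \<bar>k x - h a\<bar> \<le> M)" and "x \<in> {a..b}"
    then have "M \<in> S" using h unfolding S_def by auto
    then have "Inf S \<le> M" using cInf_lower \<open>bdd_below S\<close> by blast
    then show "\<bar>h x - h a\<bar> \<le> M + r"
      using \<open>\<forall>x\<in>{a..b}. \<bar>h x - ya\<bar> \<le> M0\<close> \<open>M0 < Inf S + r\<close> \<open>x \<in> {a..b}\<close> h(2) by fastforce
  qed
  with h show ?thesis by blast
qed

lemma near_optimal_abs_less:
  assumes H: "functionally_connected H" and "a < b"
    and h: "continuous_graph_in H {a..b} h" "near_optimal H a b r h"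
    and k: "continuous_graph_in H {a..b} k" "\<forall>x\<in>{a..b}. \<bar>k x - c\<bar> < e"
    and ha: "\<bar>h a - c\<bar> < e" and hb: "\<bar>h b - c\<bar> < e"
  shows "\<forall>x\<in>{a..b}. \<bar>h x - c\<bar> < 3 * e + r"
proof -
  have "(a, h a) \<in> H" "(b, h b) \<in> H"
    using h(1) \<open>a < b\<close> unfolding continuous_graph_in_def by auto
  then obtain k' where k': "continuous_graph_in H {a..b} k'" "k' a = h a" "k' b = h b"
      and "\<forall>x\<in>{a..b}. \<bar>k' x - c\<bar> < e"
    using functionally_connected_join_in_band[OF H \<open>a < b\<close> k] ha hb by blast
  then have "\<forall>x\<in>{a..b}. \<bar>k' x - h a\<bar> \<le> 2 * e"
    using ha by fastforce
  then have "\<forall>x\<in>{a..b}. \<bar>h x - h a\<bar> \<le> 2 * e + r"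
    using h(2) k' unfolding near_optimal_def by blast
  then show ?thesis
    using ha by fastforce
qed

section \<open>Pasting along the gaps of a closed set\<close>

definition gap :: "real set \<Rightarrow> real \<Rightarrow> real \<Rightarrow> bool" where
  "gap E a b \<longleftrightarrow> a \<in> E \<and> b \<in> E \<and> a < b \<and> {a<..<b} \<inter> E = {}"

lemma gap_outside: "gap E a b \<Longrightarrow> z \<in> E \<Longrightarrow> z \<le> a \<or> b \<le> z"
  unfolding gap_def by force

lemma gap_unique:
  assumes "gap E a b" "gap E a' b'" "a < x" "x < b" "a' < x" "x < b'"
  shows "a' = a \<and> b' = b"
proof -
  have "a \<in> E" "b \<in> E" "a' \<in> E" "b' \<in> E"
    using assms(1,2) unfolding gap_def by auto
  then show ?thesis
    using assms(3-) gap_outside[OF assms(1), of a'] gap_outside[OF assms(1), of b']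
      gap_outside[OF assms(2), of a] gap_outside[OF assms(2), of b] by linarith
qed

lemma gap_reflect: "gap (uminus ` E) a b \<longleftrightarrow> gap E (- b) (- a)"
proof -
  have "uminus ` ({- b<..<- a} \<inter> E) = {a<..<b} \<inter> uminus ` E"
    by (simp add: image_Int)
  then have "{a<..<b} \<inter> uminus ` E = {} \<longleftrightarrow> {- b<..<- a} \<inter> E = {}"
    by (metis image_is_empty)
  moreover have "x \<in> uminus ` E \<longleftrightarrow> - x \<in> E" for x
    by force
  ultimately show ?thesis
    unfolding gap_def by auto
qed

lemma closed_gap_cover:
  assumes "closed E" "\<exists>a\<in>E. a \<le> x" "\<exists>b\<in>E. x \<le> b" "x \<notin> E"
  shows "\<exists>a b. gap E a b \<and> a < x \<and> x < b"
proof (intro exI conjI)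
  let ?a = "Sup (E \<inter> {..x})" and ?b = "Inf (E \<inter> {x..})"
  have bdd: "bdd_above (E \<inter> {..x})" "bdd_below (E \<inter> {x..})"
    by (auto intro: bdd_aboveI bdd_belowI)
  have a: "?a \<in> E" "?a \<le> x"
    using closed_contains_Sup[of "E \<inter> {..x}"] assms(1,2) bdd by auto
  have b: "?b \<in> E" "x \<le> ?b"
    using closed_contains_Inf[of "E \<inter> {x..}"] assms(1,3) bdd by auto
  show "?a < x" "x < ?b"
    using a b \<open>x \<notin> E\<close> by (auto simp: less_le)
  have "z \<le> ?a \<or> ?b \<le> z" if "z \<in> E" for z
    using that bdd cSup_upper[of z "E \<inter> {..x}"] cInf_lower[of z "E \<inter> {x..}"] by force
  then show "gap E ?a ?b"
    using a b \<open>?a < x\<close> \<open>x < ?b\<close> unfolding gap_def by force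
qed

locale gap_pasting =
  fixes E :: "real set" and g :: "real \<Rightarrow> real"
  assumes gap_cover: "x \<notin> E \<Longrightarrow> \<exists>a b. gap E a b \<and> a < x \<and> x < b"
    and continuous_on_E: "continuous_on E g"
    and continuous_on_gap: "gap E a b \<Longrightarrow> continuous_on {a..b} g"
    and small_gaps: "p \<in> E \<Longrightarrow> e > 0 \<Longrightarrow> \<exists>d>0. \<forall>a b. gap E a b \<and> \<bar>a - p\<bar> < d \<and> \<bar>b - p\<bar> < d
                        \<longrightarrow> (\<forall>y\<in>{a..b}. \<bar>g y - g p\<bar> < e)"
begin

lemma accumulates_right:
  assumes "p \<in> E" "\<nexists>b. gap E p b" "r > 0"
  shows "\<exists>z\<in>E. p < z \<and> z < p + r"
proof (rule ccontr)
  assume none: "\<not> ?thesis"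
  define x where "x = p + r / 2"
  have x: "p < x" "x < p + r"
    using \<open>r > 0\<close> unfolding x_def by auto
  then have "x \<notin> E"
    using none by blast
  then obtain a b where ab: "gap E a b" "a < x" "x < b"
    using gap_cover by blast
  then have "a \<in> E" "p \<le> a"
    using gap_outside[OF ab(1) \<open>p \<in> E\<close>] x unfolding gap_def by auto
  then have "a = p"
    using none ab(2) x by force
  with assms(2) ab(1) show False by blast
qed

lemma continuous_at_right:
  assumes "p \<in> E"
  shows "continuous (at_right p) g"
  unfolding continuous_within tendsto_iff eventually_at_right_field dist_real_def
proof (intro allI impI)
  fix e :: real assume "e > 0"
  show "\<exists>b>p. \<forall>y>p. y < b \<longrightarrow> \<bar>g y - g p\<bar> < e"
  proof (cases "\<exists>b. gap E p b")
    case True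
    then obtain b where "gap E p b" ..
    then have "p < b" "continuous_on {p..b} g"
      using continuous_on_gap unfolding gap_def by auto
    then obtain d where "d > 0" and d: "\<forall>y\<in>{p..b}. \<bar>y - p\<bar> < d \<longrightarrow> \<bar>g y - g p\<bar> < e"
      using continuous_on_abs_less_nearby[of "{p..b}" g p "g p" e] \<open>e > 0\<close> by auto
    show ?thesis
      using d \<open>d > 0\<close> \<open>p < b\<close> by (intro exI[of _ "p + min d (b - p)"]) auto
  next
    case False
    obtain d1 where "d1 > 0" and d1: "\<forall>y\<in>E. \<bar>y - p\<bar> < d1 \<longrightarrow> \<bar>g y - g p\<bar> < e"
      using continuous_on_abs_less_nearby[OF continuous_on_E \<open>p \<in> E\<close>, of "g p" e] \<open>e > 0\<close> by auto
    obtain d2 where "d2 > 0" and d2: "\<forall>a b. gap E a b \<and> \<bar>a - p\<bar> < d2 \<and> \<bar>b - p\<bar> < d2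
                        \<longrightarrow> (\<forall>y\<in>{a..b}. \<bar>g y - g p\<bar> < e)"
      using small_gaps[OF \<open>p \<in> E\<close> \<open>e > 0\<close>] by blast
    have "\<exists>z\<in>E. p < z \<and> z < p + min d1 d2"
      using accumulates_right[OF \<open>p \<in> E\<close> False] \<open>d1 > 0\<close> \<open>d2 > 0\<close> by simp
    then obtain z where "z \<in> E" "p < z" "z < p + min d1 d2" by blast
    have "\<bar>g y - g p\<bar> < e" if "p < y" "y < z" for y
    proof (cases "y \<in> E")
      case True
      then show ?thesis using d1 that \<open>z < p + min d1 d2\<close> by auto
    next
      case False
      then obtain a b where ab: "gap E a b" "a < y" "y < b"
        using gap_cover by blast
      have "p \<le> a" "b \<le> z"
        using gap_outside[OF ab(1) \<open>p \<in> E\<close>] gap_outside[OF ab(1) \<open>z \<in> E\<close>] ab that by auto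
      then have "\<bar>a - p\<bar> < d2" "\<bar>b - p\<bar> < d2"
        using ab that \<open>z < p + min d1 d2\<close> by auto
      then show ?thesis
        using d2 ab by auto
    qed
    with \<open>p < z\<close> show ?thesis by blast
  qed
qed

end

lemma gap_pasting_reflect:
  assumes "gap_pasting E g"
  shows "gap_pasting (uminus ` E) (\<lambda>x. g (- x))"
proof -
  interpret gap_pasting E g by fact
  have mem: "x \<in> uminus ` E \<longleftrightarrow> - x \<in> E" for x
    by force
  show ?thesis
  proof
    fix x assume "x \<notin> uminus ` E"
    then obtain a b where "gap E a b" "a < - x" "- x < b"
      using gap_cover mem by blast
    then show "\<exists>a b. gap (uminus ` E) a b \<and> a < x \<and> x < b"
      by (intro exI[of _ "- b"] exI[of _ "- a"]) (auto simp: gap_reflect)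
  next
    show "continuous_on (uminus ` E) (\<lambda>x. g (- x))"
      by (rule continuous_on_compose2[OF continuous_on_E]) (auto intro: continuous_intros)
  next
    fix a b assume "gap (uminus ` E) a b"
    then have "continuous_on {- b..- a} g"
      by (intro continuous_on_gap) (simp add: gap_reflect)
    then show "continuous_on {a..b} (\<lambda>x. g (- x))"
      by (rule continuous_on_compose2) (auto intro: continuous_intros)
  next
    fix p e :: real assume "p \<in> uminus ` E" "e > 0"
    then obtain d where "d > 0" and d: "\<forall>a b. gap E a b \<and> \<bar>a - - p\<bar> < d \<and> \<bar>b - - p\<bar> < d
                        \<longrightarrow> (\<forall>y\<in>{a..b}. \<bar>g y - g (- p)\<bar> < e)"
      using small_gaps mem by blast
    have "\<forall>y\<in>{a..b}. \<bar>g (- y) - g (- p)\<bar> < e"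
      if "gap (uminus ` E) a b" "\<bar>a - p\<bar> < d" "\<bar>b - p\<bar> < d" for a b
    proof
      fix y assume "y \<in> {a..b}"
      then have "- y \<in> {- b..- a}" by simp
      moreover have "gap E (- b) (- a)" "\<bar>- b - - p\<bar> < d" "\<bar>- a - - p\<bar> < d"
        using that by (auto simp: gap_reflect)
      ultimately show "\<bar>g (- y) - g (- p)\<bar> < e"
        using d by blast
    qed
    with \<open>d > 0\<close> show "\<exists>d>0. \<forall>a b. gap (uminus ` E) a b \<and> \<bar>a - p\<bar> < d \<and> \<bar>b - p\<bar> < d
                        \<longrightarrow> (\<forall>y\<in>{a..b}. \<bar>g (- y) - g (- p)\<bar> < e)"
      by blast
  qed
qed

lemma (in gap_pasting) continuous: "continuous_on UNIV g"
proof -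
  have "isCont g x" for x
  proof (cases "x \<in> E")
    case True
    interpret reflected: gap_pasting "uminus ` E" "\<lambda>x. g (- x)"
      by (rule gap_pasting_reflect) (rule gap_pasting_axioms)
    have "continuous (at_right (- x)) (\<lambda>x. g (- x))"
      using True by (intro reflected.continuous_at_right) auto
    then have "continuous (at_left x) g"
      by (simp add: continuous_within filterlim_at_left_to_right)
    with continuous_at_right[OF True] show ?thesis
      by (simp add: continuous_at_split)
  next
    case False
    then obtain a b where "gap E a b" "a < x" "x < b"
      using gap_cover by blast
    moreover have "x \<in> interior {a..b}"
      using \<open>a < x\<close> \<open>x < b\<close> by simp
    ultimately show ?thesis
      using continuous_on_interior continuous_on_gap by blast
  qed
  then show ?thesis
    by (simp add: continuous_on_eq_continuous_at)
qed

lemma near_optimal_gap_joins_close: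
  assumes H: "functionally_connected H"
    and below: "\<forall>x. \<exists>a\<in>E. a \<le> x" and above: "\<forall>x. \<exists>b\<in>E. x \<le> b"
    and f: "continuous_on E f" "\<forall>x\<in>E. (x, f x) \<in> H"
    and G: "\<And>a b. gap E a b \<Longrightarrow> continuous_graph_in H {a..b} (G a b) \<and>
              G a b a = f a \<and> G a b b = f b \<and> near_optimal H a b (b - a) (G a b)"
    and "p \<in> E" "e > 0"
  shows "\<exists>d>0. \<forall>a b. gap E a b \<and> \<bar>a - p\<bar> < d \<and> \<bar>b - p\<bar> < d
           \<longrightarrow> (\<forall>y\<in>{a..b}. \<bar>G a b y - f p\<bar> < e)"
proof -
  obtain zl zr where z: "zl \<in> E" "zl < p" "zr \<in> E" "p < zr"
    using below[rule_format, of "p - 1"] above[rule_format, of "p + 1"] by force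
  then obtain k where k: "continuous_graph_in H {zl..zr} k" "k p = f p"
    using functionally_connected_path_through[OF H, of zl p zr] f(2) \<open>p \<in> E\<close> by blast
  obtain d1 where "d1 > 0" and d1: "\<forall>x\<in>{zl..zr}. \<bar>x - p\<bar> < d1 \<longrightarrow> \<bar>k x - f p\<bar> < e / 4"
    using continuous_on_abs_less_nearby[of "{zl..zr}" k p "f p" "e / 4"] k z \<open>e > 0\<close>
    unfolding continuous_graph_in_def by auto
  obtain d2 where "d2 > 0" and d2: "\<forall>x\<in>E. \<bar>x - p\<bar> < d2 \<longrightarrow> \<bar>f x - f p\<bar> < e / 4"
    using continuous_on_abs_less_nearby[OF f(1) \<open>p \<in> E\<close>, of "f p" "e / 4"] \<open>e > 0\<close> by auto
  define d where "d = min (min d1 d2) (min (e / 8) (min (p - zl) (zr - p)))"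
  have "d > 0"
    using \<open>d1 > 0\<close> \<open>d2 > 0\<close> \<open>e > 0\<close> z unfolding d_def by auto
  moreover have "\<bar>G a b y - f p\<bar> < e"
    if ab: "gap E a b" "\<bar>a - p\<bar> < d" "\<bar>b - p\<bar> < d" and y: "y \<in> {a..b}" for a b y
  proof -
    have "a < b" "a \<in> E" "b \<in> E"
      using ab(1) unfolding gap_def by auto
    have d: "d \<le> d1" "d \<le> d2" "d \<le> e / 8" "d \<le> p - zl" "d \<le> zr - p"
      unfolding d_def by (meson min.cobounded1 min.cobounded2 order_trans)+
    then have "{a..b} \<subseteq> {zl..zr}" "\<forall>x\<in>{a..b}. \<bar>x - p\<bar> < d1" "b - a < e / 4"
      using ab(2,3) by (auto simp: abs_less_iff)
    then have "\<forall>x\<in>{a..b}. \<bar>k x - f p\<bar> < e / 4" "continuous_graph_in H {a..b} k"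
      using d1 continuous_graph_in_subset[OF k(1)] by auto
    moreover have "\<bar>G a b a - f p\<bar> < e / 4" "\<bar>G a b b - f p\<bar> < e / 4"
      using G[OF ab(1)] d2 ab(2,3) d(2) \<open>a \<in> E\<close> \<open>b \<in> E\<close> by auto
    ultimately have "\<forall>x\<in>{a..b}. \<bar>G a b x - f p\<bar> < 3 * (e / 4) + (b - a)"
      using near_optimal_abs_less[OF H \<open>a < b\<close>] G[OF ab(1)] by blast
    with y \<open>b - a < e / 4\<close> show ?thesis by fastforce
  qed
  ultimately show ?thesis by blast
qed

lemma gap_filling:
  assumes "\<And>x. x \<notin> E \<Longrightarrow> \<exists>a b. gap E a b \<and> a < x \<and> x < b"
    and "\<And>a b. gap E a b \<Longrightarrow> G a b a = f a \<and> G a b b = f b"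
  shows "\<exists>g. (\<forall>x\<in>E. g x = f x) \<and> (\<forall>a b x. gap E a b \<and> x \<in> {a..b} \<longrightarrow> g x = G a b x)"
proof -
  obtain A B where AB: "\<And>x. x \<notin> E \<Longrightarrow> gap E (A x) (B x) \<and> A x < x \<and> x < B x"
    using assms(1) by metis
  define g where "g x = (if x \<in> E then f x else G (A x) (B x) x)" for x
  have "g x = G a b x" if "gap E a b" "x \<in> {a..b}" for a b x
  proof (cases "x \<in> E")
    case True
    then have "x = a \<or> x = b"
      using that unfolding gap_def by force
    with True show ?thesis
      using assms(2)[OF that(1)] by (auto simp: g_def)
  next
    case False
    then have "a < x" "x < b"
      using that unfolding gap_def by (auto simp: less_le)
    with False show ?thesis
      using gap_unique[OF that(1), of "A x" "B x" x] AB[OF False] by (simp add: g_def)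
  qed
  then show ?thesis
    by (intro exI[of _ g]) (simp add: g_def)
qed

lemma functionally_connected_extension_unbounded:
  assumes H: "functionally_connected H" and "closed E"
    and below: "\<forall>x. \<exists>a\<in>E. a \<le> x" and above: "\<forall>x. \<exists>b\<in>E. x \<le> b"
    and f: "continuous_on E f" "\<forall>x\<in>E. (x, f x) \<in> H"
  shows "\<exists>g. continuous_on UNIV g \<and> (\<forall>x\<in>E. g x = f x) \<and> (\<forall>x. (x, g x) \<in> H)"
proof -
  have "\<exists>h. gap E a b \<longrightarrow> continuous_graph_in H {a..b} h \<and> h a = f a \<and> h b = f b \<and>
          near_optimal H a b (b - a) h" for a b
    using functionally_connected_near_optimal_join[OF H] f(2) unfolding gap_def by auto
  then obtain G where G: "\<And>a b. gap E a b \<Longrightarrow> continuous_graph_in H {a..b} (G a b) \<and>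
                            G a b a = f a \<and> G a b b = f b \<and> near_optimal H a b (b - a) (G a b)"
    by metis
  have cover: "x \<notin> E \<Longrightarrow> \<exists>a b. gap E a b \<and> a < x \<and> x < b" for x
    using closed_gap_cover[OF \<open>closed E\<close>] below above by blast
  then obtain g where g_E: "\<forall>x\<in>E. g x = f x"
      and g_gap: "\<And>a b x. gap E a b \<Longrightarrow> x \<in> {a..b} \<Longrightarrow> g x = G a b x"
    using gap_filling[OF cover, of G f] G by blast
  interpret gap_pasting E g
  proof
    have "continuous_on E g \<longleftrightarrow> continuous_on E f"
      by (rule continuous_on_cong) (simp_all add: g_E)
    with f(1) show "continuous_on E g" by blast
  next
    fix a b assume ab: "gap E a b"
    have "continuous_on {a..b} g \<longleftrightarrow> continuous_on {a..b} (G a b)"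
      by (rule continuous_on_cong) (simp_all add: g_gap[OF ab])
    with G[OF ab] show "continuous_on {a..b} g"
      unfolding continuous_graph_in_def by blast
  next
    fix p e :: real assume "p \<in> E" "e > 0"
    then obtain d where "d > 0" and d: "\<forall>a b. gap E a b \<and> \<bar>a - p\<bar> < d \<and> \<bar>b - p\<bar> < d
                 \<longrightarrow> (\<forall>y\<in>{a..b}. \<bar>G a b y - f p\<bar> < e)"
      using near_optimal_gap_joins_close[OF H below above f G] by blast
    moreover have "g p = f p"
      using g_E \<open>p \<in> E\<close> by blast
    ultimately show "\<exists>d>0. \<forall>a b. gap E a b \<and> \<bar>a - p\<bar> < d \<and> \<bar>b - p\<bar> < d
                 \<longrightarrow> (\<forall>y\<in>{a..b}. \<bar>g y - g p\<bar> < e)"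
      using \<open>d > 0\<close> g_gap by (intro exI[of _ d]) auto
  qed (fact cover)
  have "(x, g x) \<in> H" for x
  proof (cases "x \<in> E")
    case False
    then obtain a b where "gap E a b" "a < x" "x < b"
      using cover by blast
    with G g_gap show ?thesis
      unfolding continuous_graph_in_def by fastforce
  qed (use f(2) g_E in auto)
  with continuous g_E show ?thesis
    by blast
qed

lemma continuous_on_extend_to_Ints:
  fixes f y :: "real \<Rightarrow> 'a::topological_space"
  assumes "closed E" "continuous_on E f"
  shows "continuous_on (E \<union> \<int>) (\<lambda>x. if x \<in> E then f x else y x)"
proof -
  have "uniform_discrete (\<int> - E :: real set)"
    unfolding uniform_discrete_def
    by (intro exI[of _ 1]) (auto elim!: Ints_cases simp: dist_of_int)
  then have "continuous_on (\<int> - E) (\<lambda>x. if x \<in> E then f x else y x)"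
    by (intro continuous_on_discrete uniform_discrete_imp_discrete)
  moreover have "continuous_on E (\<lambda>x. if x \<in> E then f x else y x)"
    using assms(2) by (rule continuous_on_cong[THEN iffD1, rotated 2]) simp_all
  moreover have "closed (\<int> - E :: real set)"
    by (rule closed_subset_Ints) blast
  ultimately have "continuous_on (E \<union> (\<int> - E)) (\<lambda>x. if x \<in> E then f x else y x)"
    using continuous_on_closed_Un[OF assms(1)] by blast
  moreover have "E \<union> (\<int> - E) = E \<union> \<int>"
    by blast
  ultimately show ?thesis
    by simp
qed

lemma functionally_connected_extension:
  assumes H: "functionally_connected H" and fibres: "\<And>x. \<exists>y. (x, y) \<in> H"
    and "closed E" and f: "continuous_on E f" "\<forall>x\<in>E. (x, f x) \<in> H"
  shows "\<exists>g. continuous_on UNIV g \<and> (\<forall>x\<in>E. g x = f x) \<and> (\<forall>x. (x, g x) \<in> H)"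
proof -
  obtain y where y: "\<And>x. (x, y x) \<in> H"
    using fibres by metis
  define f' where "f' x = (if x \<in> E then f x else y x)" for x
  have "continuous_on (E \<union> \<int>) f'"
    unfolding f'_def using \<open>closed E\<close> f(1) by (rule continuous_on_extend_to_Ints)
  moreover have "\<forall>x. \<exists>a\<in>E \<union> \<int>. a \<le> x" "\<forall>x. \<exists>b\<in>E \<union> \<int>. x \<le> b"
    using of_int_floor_le le_of_int_ceiling Ints_of_int by blast+
  moreover have "\<forall>x\<in>E \<union> \<int>. (x, f' x) \<in> H"
    using f(2) y by (simp add: f'_def)
  ultimately obtain g where "continuous_on UNIV g" "\<forall>x\<in>E \<union> \<int>. g x = f' x" "\<forall>x. (x, g x) \<in> H"
    using functionally_connected_extension_unbounded[OF H closed_Un[OF \<open>closed E\<close> closed_Ints]]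
    by blast
  then show ?thesis
    by (auto simp: f'_def)
qed

theorem lemma4p4:
  fixes H :: "(real \<times> real) set"
  assumes "functionally_connected H"
    and "fst ` H = UNIV"
  shows "\<forall>(f :: real \<Rightarrow> real) (E :: real set).
           continuous_on UNIV f \<and> closed E \<and> (\<forall>x \<in> E. (x, f x) \<in> H) \<longrightarrow>
           (\<exists>g :: real \<Rightarrow> real. continuous_on UNIV g \<and> (\<forall>x \<in> E. g x = f x) \<and>
              (\<forall>x. (x, g x) \<in> H))"
proof (intro allI impI, elim conjE)
  fix f :: "real \<Rightarrow> real" and E :: "real set"
  assume "continuous_on UNIV f" "closed E" "\<forall>x\<in>E. (x, f x) \<in> H"
  moreover have "\<exists>y. (x, y) \<in> H" for x
  proof -
    have "x \<in> fst ` H" using assms(2) by simp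
    then show ?thesis by force
  qed
  ultimately show "\<exists>g. continuous_on UNIV g \<and> (\<forall>x\<in>E. g x = f x) \<and> (\<forall>x. (x, g x) \<in> H)"
    using functionally_connected_extension[OF assms(1)] continuous_on_subset[OF _ subset_UNIV]
    by blast
qed

end
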